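(* There exist two infinite bit sequences $\{I_n^0\}_{n=0}^\infty\in\{0,1\}^\omega$ and $\{I_n^1\}_{n=0}^\infty\in\{0,1\}^\omega$ such that for every $Q\in\mathbb{N}$ there exist $t\in\mathbb{N}$ and two $Q$-indistinguishable binary words $x=x_0\ldots x_{t-1}$ and $y=y_0\ldots y_{t-1}$ of length $t$ with \[I_0^{x_0}\oplus\cdots\oplus I_{t-1}^{x_{t-1}}\neq I_0^{y_0}\oplus\cdots\oplus I_{t-1}^{y_{t-1}},\] where $\oplus$ denotes XOR.
   Context: Two binary words $x,y\in\{0,1\}^*$ are $Q$-indistinguishable if there is no deterministic finite automaton over the alphabet $\{0,1\}$ with at most $Q$ states which reaches different states after reading $x$ and after reading $y$ (from its initial state). *)

theory Defs
  imports Main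
begin

text \<open>A DFA over the alphabet {0,1} (bits encoded as bool, False = 0, True = 1)
  with state set {0..<n}: an initial state and a transition function
  that maps the state set into itself.\<close>
definition is_dfa :: "nat \<Rightarrow> nat \<Rightarrow> (nat \<Rightarrow> bool \<Rightarrow> nat) \<Rightarrow> bool" where
  "is_dfa n q0 \<delta> \<longleftrightarrow> q0 < n \<and> (\<forall>q<n. \<forall>b. \<delta> q b < n)"

definition run :: "(nat \<Rightarrow> bool \<Rightarrow> nat) \<Rightarrow> nat \<Rightarrow> bool list \<Rightarrow> nat" where
  "run \<delta> q w = foldl \<delta> q w"

definition Q_indist :: "nat \<Rightarrow> bool list \<Rightarrow> bool list \<Rightarrow> bool" where
  "Q_indist Q x y \<longleftrightarrow>
     \<not> (\<exists>n q0 \<delta>. n \<le> Q \<and> is_dfa n q0 \<delta> \<and> run \<delta> q0 x \<noteq> run \<delta> q0 y)"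

definition xor_sel :: "(nat \<Rightarrow> bool) \<Rightarrow> (nat \<Rightarrow> bool) \<Rightarrow> bool list \<Rightarrow> bool" where
  "xor_sel I0 I1 x = foldr (\<noteq>) (map (\<lambda>i. if x ! i then I1 i else I0 i) [0..<length x]) False"

end

theory Submission
  imports Defs
begin

text \<open>Take \<open>I\<^sup>0 \<equiv> 0\<close> and let \<open>I\<^sup>1\<close> be the indicator of the factorials. For
  \<open>K = (Q+2)!\<close>, every self-map \<open>f\<close> of a set with at most \<open>Q\<close> elements satisfies
  \<open>f\<^bsup>2K\<^esup> = f\<^bsup>K\<^esup>\<close>: each orbit enters a cycle within \<open>Q\<close> steps and the cycle
  length divides \<open>K\<close>. Hence the words \<open>0\<^bsup>K\<^esup>1\<^bsup>2K\<^esup>\<close> and \<open>0\<^bsup>2K\<^esup>1\<^bsup>K\<^esup>\<close> drive every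
  DFA with at most \<open>Q\<close> states to the same state. Their selected XORs count the
  factorials in \<open>[K, 3K)\<close> and in \<open>[2K, 3K)\<close>, which are one and zero.\<close>

lemma funpow_orbit_repeats:
  assumes "finite A" "f ` A \<subseteq> A" "q \<in> A"
  shows "\<exists>i j. i < j \<and> j \<le> card A \<and> (f ^^ i) q = (f ^^ j) q"
proof -
  have "(f ^^ i) q \<in> A" for i
    by (induction i) (use assms in auto)
  then have "(\<lambda>i. (f ^^ i) q) ` {0..card A} \<subseteq> A"
    by auto
  then have "\<not> inj_on (\<lambda>i. (f ^^ i) q) {0..card A}"
    using card_inj_on_le[OF _ _ \<open>finite A\<close>] by fastforce
  then obtain i j where "i \<le> card A" "j \<le> card A" "i \<noteq> j" "(f ^^ i) q = (f ^^ j) q"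
    unfolding inj_on_def by auto
  then show ?thesis
    by (metis linorder_neqE_nat)
qed

lemma funpow_eventually_periodic:
  fixes f :: "'a \<Rightarrow> 'a"
  assumes "(f ^^ (i + p)) q = (f ^^ i) q" "i \<le> m"
  shows "(f ^^ (m + k * p)) q = (f ^^ m) q"
proof (induction k)
  case (Suc k)
  have "m + Suc k * p = (m - i + k * p) + (i + p)" "m + k * p = (m - i + k * p) + i"
    using \<open>i \<le> m\<close> by simp_all
  then show ?case
    using Suc.IH assms(1) by (metis funpow_add o_apply)
qed simp

lemma funpow_double_fact:
  assumes "finite A" "f ` A \<subseteq> A" "q \<in> A" "card A \<le> N"
  shows "(f ^^ (2 * fact N)) q = (f ^^ fact N) q"
proof -
  obtain i j where ij: "i < j" "j \<le> card A" "(f ^^ i) q = (f ^^ j) q"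
    using funpow_orbit_repeats[OF assms(1-3)] by blast
  then have "j - i dvd fact N"
    using assms(4) by (intro dvd_fact) auto
  then obtain c where c: "fact N = c * (j - i)"
    by (metis dvd_div_mult_self)
  have "i \<le> fact N"
    using ij assms(4) fact_ge_self[of N] by linarith
  moreover have "(f ^^ (i + (j - i))) q = (f ^^ i) q"
    using ij by simp
  ultimately have "(f ^^ (fact N + c * (j - i))) q = (f ^^ fact N) q"
    by (rule funpow_eventually_periodic[rotated])
  then show ?thesis
    using c by (simp add: mult_2)
qed

lemma run_append: "run \<delta> q (x @ y) = run \<delta> (run \<delta> q x) y"
  by (simp add: run_def)

lemma run_replicate: "run \<delta> q (replicate n b) = ((\<lambda>s. \<delta> s b) ^^ n) q"
  by (simp add: run_def foldl_conv_fold)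

lemma run_lessThan:
  assumes "is_dfa n q0 \<delta>"
  shows "run \<delta> q0 w < n"
  using assms unfolding is_dfa_def run_def
  by (induction w arbitrary: q0 rule: rev_induct) auto

lemma Q_indist_fact_blocks:
  assumes "Q \<le> N"
  shows "Q_indist Q (replicate (fact N) False @ replicate (2 * fact N) True)
                    (replicate (2 * fact N) False @ replicate (fact N) True)"
  unfolding Q_indist_def
proof (intro notI, elim exE conjE)
  fix n q0 \<delta>
  assume "n \<le> Q" and dfa: "is_dfa n q0 \<delta>"
  let ?K = "fact N :: nat" and ?\<delta> = "\<lambda>b s. \<delta> s b"
  have collapse: "(?\<delta> b ^^ (2 * ?K)) q = (?\<delta> b ^^ ?K) q" if "q < n" for b q
    using that dfa \<open>n \<le> Q\<close> \<open>Q \<le> N\<close> unfolding is_dfa_def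
    by (intro funpow_double_fact[where A = "{..<n}"]) auto
  have "q0 < n" "run \<delta> q0 (replicate ?K False) < n"
    using run_lessThan[OF dfa, of "[]"] run_lessThan[OF dfa] by (simp_all add: run_def)
  then have "run \<delta> q0 (replicate ?K False @ replicate (2 * ?K) True)
           = run \<delta> q0 (replicate (2 * ?K) False @ replicate ?K True)"
    using collapse by (simp add: run_append run_replicate)
  moreover assume "run \<delta> q0 (replicate ?K False @ replicate (2 * ?K) True)
           \<noteq> run \<delta> q0 (replicate (2 * ?K) False @ replicate ?K True)"
  ultimately show False
    by contradiction
qed

lemma xor_sel_eq_odd_card:
  "xor_sel I0 I1 x = odd (card {i. i < length x \<and> (if x ! i then I1 i else I0 i)})"
proof -
  have "foldr (\<noteq>) bs False = odd (length (filter id bs))" for bs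
    by (induction bs) auto
  then show ?thesis
    unfolding xor_sel_def
    by (simp add: length_filter_conv_card) (rule arg_cong[where f = "\<lambda>S. even (card S)"], auto)
qed

lemma xor_sel_blocks:
  "xor_sel (\<lambda>_. False) I1 (replicate a False @ replicate b True)
     = odd (card {i. a \<le> i \<and> i < a + b \<and> I1 i})"
  unfolding xor_sel_eq_odd_card
  by (rule arg_cong[where f = "\<lambda>S. odd (card S)"]) (auto simp: nth_append)

lemma fact_mem_atLeastLessThan_iff:
  assumes "2 \<le> m"
  shows "fact k \<in> {fact m..<3 * (fact m :: nat)} \<longleftrightarrow> k = m"
proof
  assume between: "fact k \<in> {fact m..<3 * (fact m :: nat)}"
  show "k = m"
  proof (rule linorder_cases[of k m])
    assume "k < m"
    then have "fact k < (fact m :: nat)"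
      using assms fact_less_mono_nat[of k m] fact_less_mono_nat[of 1 m] by (cases k) auto
    with between show ?thesis by simp
  next
    assume "m < k"
    then have "3 * fact m \<le> (fact (Suc m) :: nat)"
      using assms by simp
    also have "\<dots> \<le> fact k"
      using \<open>m < k\<close> by (intro fact_mono_nat) simp
    finally show ?thesis using between by simp
  qed
qed simp

lemma xor_sel_fact_blocks_differ:
  assumes "2 \<le> m"
  shows "xor_sel (\<lambda>_. False) (\<lambda>i. i \<in> range fact)
           (replicate (fact m) False @ replicate (2 * fact m) True)
       \<noteq> xor_sel (\<lambda>_. False) (\<lambda>i. i \<in> range fact)
           (replicate (2 * fact m) False @ replicate (fact m) True)"
proof -
  let ?K = "fact m :: nat"
  have one: "{i. ?K \<le> i \<and> i < ?K + 2 * ?K \<and> i \<in> range fact} = {?K}"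
    using fact_mem_atLeastLessThan_iff[OF assms] by (auto; metis atLeastLessThan_iff)
  have none: "{i. 2 * ?K \<le> i \<and> i < 2 * ?K + ?K \<and> i \<in> range fact} = {}"
  proof -
    have "fact k \<notin> {2 * ?K..<3 * ?K}" for k
      using fact_mem_atLeastLessThan_iff[OF assms, of k] fact_gt_zero[of m] by auto
    then show ?thesis
      by auto
  qed
  show ?thesis
    unfolding xor_sel_blocks one none by simp
qed

theorem lemma1:
  shows "\<exists>I0 I1 :: nat \<Rightarrow> bool. \<forall>Q :: nat. \<exists>t :: nat. \<exists>x y :: bool list.
            length x = t \<and> length y = t \<and> Q_indist Q x y \<and>
            xor_sel I0 I1 x \<noteq> xor_sel I0 I1 y"
proof -
  have "\<exists>t x y. length x = t \<and> length y = t \<and> Q_indist Q x y \<and>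
      xor_sel (\<lambda>_. False) (\<lambda>i. i \<in> range fact) x \<noteq> xor_sel (\<lambda>_. False) (\<lambda>i. i \<in> range fact) y"
    for Q :: nat
  proof -
    let ?K = "fact (Q + 2) :: nat"
    let ?x = "replicate ?K False @ replicate (2 * ?K) True"
    and ?y = "replicate (2 * ?K) False @ replicate ?K True"
    have "length ?x = 3 * ?K" "length ?y = 3 * ?K"
      by simp_all
    moreover have "Q_indist Q ?x ?y"
      by (rule Q_indist_fact_blocks) simp
    moreover have "xor_sel (\<lambda>_. False) (\<lambda>i. i \<in> range fact) ?x
                 \<noteq> xor_sel (\<lambda>_. False) (\<lambda>i. i \<in> range fact) ?y"
      by (rule xor_sel_fact_blocks_differ) simp
    ultimately show ?thesis
      by blast
  qed
  then show ?thesis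
    by blast
qed

end
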